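(* Let $d\ge1$, $D>0$, $\sigma\ge0$, $\alpha\in[0,1)$, $\rho>0$, and let $T$ be an even positive integer. Let $w^*\in\mathbb{R}^d$ with $\|w^*\|\le D$, and let $(x,\epsilon,b)$ be mutually independent random variables with $x\in\mathbb{R}^d$, $\|x\|\le1$ a.s., $\Sigma:=\mathbb{E}[(x-\mathbb{E}x)(x-\mathbb{E}x)^T]\succeq\rho I$, $\epsilon\in\mathbb{R}$, $|\epsilon|\le\sigma$ a.s., $\mathbb{E}\epsilon=0$, $b\in\mathbb{R}$, $\mathbb{P}(b\ne0)=\alpha$; set $y=\langle w^*,x\rangle+\epsilon+b$. Let $R=6D+\sigma$, $\lambda=(1-\alpha)\rho$, $C=\frac{(1-\alpha)\rho}{2}$. Run the following algorithm on $2T$ i.i.d. samples distributed as $(x,y)$: Phase 1: draw $(z_i,y_i)_{i=1}^T$ and set $\mu=\frac1T\sum_{i=1}^Tz_i$; Phase 2: $w_1=0$, and for $t=1,\dots,T$ draw a fresh sample $(x_t,y_t)$, set $\eta_t=\frac1{\lambda t}$, $g_t=\phi_R(\langle w_t,x_t-\mu\rangle-y_t)(x_t-\mu)$, $w_{t+1}=\Pi_{\mathcal W}(w_t-\eta_tg_t)$; output $\bar w=\frac2T\sum_{t=T/2+1}^Tw_t$. With this (random) $\mu$, define, for $w\in\mathbb{R}^d$, with $(x,\epsilon,b)$ an independent copy, $$L_R(w)=\mathbb{E}_{x,\epsilon,b}\big[h_R(\langle w-w^*,x-\mu\rangle-\langle w^*,\mu\rangle-\epsilon-b)\big],\quad \tilde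 L_R(w)=\mathbb{E}_{x,\epsilon,b}\big[h_R(\langle w-w^*,x-\mathbb{E}x\rangle-\langle w^*,\mu\rangle-\epsilon-b)\big].$$ Then, with the outer expectation over all $2T$ samples, $$\mathbb{E}\big[\tilde L_R(\bar w)-L_R(\bar w)\big]\le\frac C2\,\mathbb{E}\|\bar w-w^*\|^2+\frac{2R^2}{C}\cdot\frac{36\log T+4}{T}.$$
   Context: $\mathcal W=\{w\in\mathbb{R}^d:\|w\|\le D\}$, $\Pi_{\mathcal W}$ is the Euclidean projection onto $\mathcal W$. The Huber loss is $h_R(s)=\frac12s^2$ if $|s|\le R$ and $h_R(s)=R(|s|-\frac12R)$ otherwise, and $\phi_R(s)=\min\{R,\max\{s,-R\}\}$ is its derivative. *)

theory Defs
  imports "HOL-Probability.Probability"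
begin

text \<open>Huber loss h_R and its derivative phi_R (clipping to [-R,R]).\<close>
definition huber :: "real \<Rightarrow> real \<Rightarrow> real" where
  "huber R s = (if \<bar>s\<bar> \<le> R then s\<^sup>2 / 2 else R * (\<bar>s\<bar> - R / 2))"

definition clip :: "real \<Rightarrow> real \<Rightarrow> real" where
  "clip R s = min R (max s (- R))"

text \<open>Positive semidefiniteness of a square matrix (Loewner order A >= B iff psd (A - B)).\<close>
definition psd :: "real^'n^'n \<Rightarrow> bool" where
  "psd A \<longleftrightarrow> (\<forall>v. 0 \<le> v \<bullet> (A *v v))"

definition covariance_matrix :: "'w measure \<Rightarrow> ('w \<Rightarrow> real^'n) \<Rightarrow> real^'n^'n" where
  "covariance_matrix M X =
     (\<chi> i j. integral\<^sup>L M (\<lambda>\<omega>. (X \<omega> - integral\<^sup>L M X) $ i * (X \<omega> - integral\<^sup>L M X) $ j))"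

text \<open>Phase-2 projected SGD iterates:
  sgd_iter D R lam mu xs k = w_(k+1), with w_1 = 0 and step t = k+1 using sample xs t.\<close>
primrec sgd_iter :: "real \<Rightarrow> real \<Rightarrow> real \<Rightarrow> 'a::euclidean_space \<Rightarrow> (nat \<Rightarrow> 'a \<times> real) \<Rightarrow> nat \<Rightarrow> 'a" where
  "sgd_iter D R lam mu xs 0 = 0"
| "sgd_iter D R lam mu xs (Suc k) =
     (let w = sgd_iter D R lam mu xs k; t = Suc k; xt = fst (xs t); yt = snd (xs t);
          g = clip R (w \<bullet> (xt - mu) - yt) *\<^sub>R (xt - mu)
      in closest_point (cball 0 D) (w - (1 / (lam * real t)) *\<^sub>R g))"

end

theory Submission
  imports Defs
begin

(* The two losses differ only in the centring point of x, which shifts the argument of the Huber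
   loss by <wbar - w*, mu - E x>.  As h_R is R-Lipschitz, pointwise in the samples
     Ltil_R wbar - L_R wbar <= R |wbar - w*| |mu - E x| <= C/2 |wbar - w*|^2 + R^2/(2C) |mu - E x|^2,
   and the phase-1 mean mu of T i.i.d. copies of x with |x| <= 1 has E |mu - E x|^2 <= 1/T, which
   is already below the rate (36 log T + 4)/T of the claim.  Only the boundedness of x enters. *)

lemma huber_lipschitz:
  assumes "0 \<le> R"
  shows "R-lipschitz_on UNIV (huber R)"
proof -
  have one_sided: "huber R a - huber R b \<le> R * \<bar>a - b\<bar>" for a b
  proof -
    consider "\<bar>a\<bar> \<le> R" "\<bar>b\<bar> \<le> R" | "\<bar>a\<bar> \<le> R" "\<bar>b\<bar> > R" | "\<bar>a\<bar> > R" "\<bar>b\<bar> \<le> R"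
      | "\<bar>a\<bar> > R" "\<bar>b\<bar> > R"
      by linarith
    then show ?thesis
    proof cases
      case 1
      have "a\<^sup>2/2 - b\<^sup>2/2 = (a - b) * (a + b) / 2" by (simp add: power2_eq_square algebra_simps)
      also have "\<dots> \<le> \<bar>a - b\<bar> * \<bar>a + b\<bar> / 2" by (simp add: abs_mult[symmetric])
      also have "\<dots> \<le> \<bar>a - b\<bar> * (2 * R) / 2" using 1 by (intro divide_right_mono mult_left_mono) auto
      finally show ?thesis using 1 by (simp add: huber_def mult.commute)
    next
      case 2
      have "a\<^sup>2/2 - R * (\<bar>b\<bar> - R/2) = - ((\<bar>b\<bar> - R) * R) - (R - \<bar>a\<bar>) * (R + \<bar>a\<bar>) / 2"
        by (simp add: power2_eq_square field_simps)
      also have "\<dots> \<le> 0"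
        using 2 assms mult_nonneg_nonneg[of "\<bar>b\<bar> - R" R] mult_nonneg_nonneg[of "R - \<bar>a\<bar>" "R + \<bar>a\<bar>"]
        by linarith
      also have "\<dots> \<le> R * \<bar>a - b\<bar>" using assms by simp
      finally show ?thesis using 2 by (simp add: huber_def)
    next
      case 3
      have "R * (\<bar>a\<bar> - R/2) - b\<^sup>2/2 = R * (\<bar>a\<bar> - \<bar>b\<bar>) - (R - \<bar>b\<bar>)\<^sup>2 / 2"
        by (simp add: power2_eq_square field_simps)
      also have "\<dots> \<le> R * (\<bar>a\<bar> - \<bar>b\<bar>)" by simp
      also have "\<dots> \<le> R * \<bar>a - b\<bar>" using assms by (intro mult_left_mono) auto
      finally show ?thesis using 3 by (simp add: huber_def)
    next
      case 4
      have "R * (\<bar>a\<bar> - R/2) - R * (\<bar>b\<bar> - R/2) = R * (\<bar>a\<bar> - \<bar>b\<bar>)" by (simp add: algebra_simps)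
      also have "\<dots> \<le> R * \<bar>a - b\<bar>" using assms by (intro mult_left_mono) auto
      finally show ?thesis using 4 by (simp add: huber_def)
    qed
  qed
  show ?thesis
  proof (rule lipschitz_onI)
    show "dist (huber R x) (huber R y) \<le> R * dist x y" for x y
      using one_sided[of x y] one_sided[of y x] by (simp add: dist_real_def abs_le_iff abs_minus_commute)
  qed (fact assms)
qed

lemma (in prob_space) integral_lipschitz_shift:
  fixes g :: "'b::{real_normed_vector, second_countable_topology} \<Rightarrow> real"
  assumes "L-lipschitz_on UNIV g" and [measurable]: "f \<in> borel_measurable M"
  shows "\<bar>(\<integral>\<omega>. g (f \<omega> + \<delta>) \<partial>M) - (\<integral>\<omega>. g (f \<omega>) \<partial>M)\<bar> \<le> L * norm \<delta>"
proof -
  have [measurable]: "g \<in> borel_measurable borel"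
    using assms(1) by (intro borel_measurable_continuous_onI lipschitz_on_continuous_on)
  define d where "d \<omega> = g (f \<omega> + \<delta>) - g (f \<omega>)" for \<omega>
  have d_le: "\<bar>d \<omega>\<bar> \<le> L * norm \<delta>" for \<omega>
    using lipschitz_onD[OF assms(1), of "f \<omega> + \<delta>" "f \<omega>"] by (simp add: d_def dist_norm dist_real_def)
  have d_integrable: "integrable M d"
    by (rule integrable_const_bound[where B = "L * norm \<delta>"]) (use d_le in \<open>auto simp: d_def[abs_def]\<close>)
  show ?thesis
  proof (cases "integrable M (\<lambda>\<omega>. g (f \<omega>))")
    case True
    have "integrable M (\<lambda>\<omega>. g (f \<omega> + \<delta>))"
      using Bochner_Integration.integrable_add[OF d_integrable True] by (simp add: d_def)
    then have "(\<integral>\<omega>. g (f \<omega> + \<delta>) \<partial>M) - (\<integral>\<omega>. g (f \<omega>) \<partial>M) = integral\<^sup>L M d"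
      unfolding d_def using True by (rule Bochner_Integration.integral_diff[symmetric])
    also have "\<bar>\<dots>\<bar> \<le> (\<integral>\<omega>. \<bar>d \<omega>\<bar> \<partial>M)" by (rule integral_abs_bound)
    also have "\<dots> \<le> L * norm \<delta>"
      using integral_mono[OF d_integrable[THEN integrable_abs] _ d_le] by (simp add: prob_space)
    finally show ?thesis .
  next
    case False
    have "\<not> integrable M (\<lambda>\<omega>. g (f \<omega> + \<delta>))"
    proof
      assume "integrable M (\<lambda>\<omega>. g (f \<omega> + \<delta>))"
      then have "integrable M (\<lambda>\<omega>. g (f \<omega> + \<delta>) - d \<omega>)"
        using d_integrable by (rule Bochner_Integration.integrable_diff)
      with False show False by (simp add: d_def)
    qed
    with False show ?thesis
      using lipschitz_on_nonneg[OF assms(1)] by (simp add: not_integrable_integral_eq)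
  qed
qed

lemma (in prob_space) integral_huber_recenter:
  fixes X :: "'a \<Rightarrow> 'b::euclidean_space"
  assumes [measurable]: "X \<in> borel_measurable M" "e \<in> borel_measurable M" and "0 \<le> R"
  shows "\<bar>(\<integral>\<omega>. huber R (v \<bullet> (X \<omega> - c) - e \<omega>) \<partial>M) - (\<integral>\<omega>. huber R (v \<bullet> (X \<omega> - c') - e \<omega>) \<partial>M)\<bar>
    \<le> R * (norm v * norm (c - c'))"
proof -
  define f where "f \<omega> = v \<bullet> (X \<omega> - c') - e \<omega>" for \<omega>
  have [measurable]: "f \<in> borel_measurable M"
    unfolding f_def[abs_def] by measurable
  have shift: "v \<bullet> (X \<omega> - c) - e \<omega> = f \<omega> + v \<bullet> (c' - c)" for \<omega>
    by (simp add: f_def inner_diff_right)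
  have "\<bar>(\<integral>\<omega>. huber R (f \<omega> + v \<bullet> (c' - c)) \<partial>M) - (\<integral>\<omega>. huber R (f \<omega>) \<partial>M)\<bar>
      \<le> R * \<bar>v \<bullet> (c' - c)\<bar>"
    using integral_lipschitz_shift[OF huber_lipschitz[OF \<open>0 \<le> R\<close>]] by simp
  then have "\<bar>(\<integral>\<omega>. huber R (v \<bullet> (X \<omega> - c) - e \<omega>) \<partial>M) - (\<integral>\<omega>. huber R (v \<bullet> (X \<omega> - c') - e \<omega>) \<partial>M)\<bar>
      \<le> R * \<bar>v \<bullet> (c' - c)\<bar>"
    by (simp only: shift f_def)
  also have "\<dots> \<le> R * (norm v * norm (c - c'))"
    using Cauchy_Schwarz_ineq2[of v "c' - c"] \<open>0 \<le> R\<close> by (simp add: mult_left_mono norm_minus_commute)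
  finally show ?thesis .
qed

lemma mult_le_weighted_squares:
  fixes a b c R :: real
  assumes "0 < c"
  shows "R * (a * b) \<le> c / 2 * a\<^sup>2 + R\<^sup>2 / (2 * c) * b\<^sup>2"
proof -
  have "c / 2 * a\<^sup>2 + R\<^sup>2 / (2 * c) * b\<^sup>2 - R * (a * b) = (c * a - R * b)\<^sup>2 / (2 * c)"
    using assms by (simp add: power2_eq_square field_simps)
  moreover have "0 \<le> (c * a - R * b)\<^sup>2 / (2 * c)"
    using assms by simp
  ultimately show ?thesis
    by linarith
qed

lemma (in prob_space) huber_recentering_gap_le:
  fixes X :: "'a \<Rightarrow> 'b::euclidean_space"
  assumes "X \<in> borel_measurable M" "e \<in> borel_measurable M" and "0 \<le> R" and "0 < C"
  shows "(\<integral>\<omega>. huber R (v \<bullet> (X \<omega> - c) - e \<omega>) \<partial>M) - (\<integral>\<omega>. huber R (v \<bullet> (X \<omega> - c') - e \<omega>) \<partial>M)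
    \<le> C / 2 * (norm v)\<^sup>2 + R\<^sup>2 / (2 * C) * (norm (c - c'))\<^sup>2"
  using order_trans[OF abs_ge_self integral_huber_recenter[OF assms(1-3), of v c c']]
    mult_le_weighted_squares[OF assms(4), of R "norm v" "norm (c - c')"]
  by linarith

lemma (in finite_product_prob_space)
  fixes f :: "_ \<Rightarrow> _ \<Rightarrow> real"
  assumes "J \<subseteq> I" and integrable: "\<And>i. i \<in> J \<Longrightarrow> integrable (M i) (f i)"
  shows integrable_PiM_prod_subset: "integrable (PiM I M) (\<lambda>x. \<Prod>i\<in>J. f i (x i))"
    and integral_PiM_prod_subset: "(\<integral>x. (\<Prod>i\<in>J. f i (x i)) \<partial>PiM I M) = (\<Prod>i\<in>J. integral\<^sup>L (M i) (f i))"
proof -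
  define f' where "f' i = (if i \<in> J then f i else (\<lambda>_. 1))" for i
  have f'_integrable: "integrable (M i) (f' i)" for i
    using integrable by (simp add: f'_def)
  have "(\<Prod>i\<in>I. g i) = (\<Prod>i\<in>J. g i)" if "\<And>i. i \<notin> J \<Longrightarrow> g i = 1" for g :: "_ \<Rightarrow> real"
    using that assms(1) finite_index by (intro prod.mono_neutral_right) auto
  then have restrict: "(\<Prod>i\<in>I. f' i (x i)) = (\<Prod>i\<in>J. f i (x i))"
    and restrict_integral: "(\<Prod>i\<in>I. integral\<^sup>L (M i) (f' i)) = (\<Prod>i\<in>J. integral\<^sup>L (M i) (f i))" for x
    by (simp_all add: f'_def M.prob_space)
  show "integrable (PiM I M) (\<lambda>x. \<Prod>i\<in>J. f i (x i))"
    using product_integrable_prod[OF finite_index f'_integrable] by (simp add: restrict)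
  show "(\<integral>x. (\<Prod>i\<in>J. f i (x i)) \<partial>PiM I M) = (\<Prod>i\<in>J. integral\<^sup>L (M i) (f i))"
    using product_integral_prod[OF finite_index f'_integrable] by (simp add: restrict restrict_integral)
qed

lemma (in finite_product_prob_space)
  fixes g h :: "_ \<Rightarrow> 'c::euclidean_space"
  assumes "i \<in> I" "j \<in> I" "i \<noteq> j" "integrable (M i) g" "integrable (M j) h"
  shows integrable_PiM_inner_components: "integrable (PiM I M) (\<lambda>x. g (x i) \<bullet> h (x j))"
    and integral_PiM_inner_components:
      "(\<integral>x. g (x i) \<bullet> h (x j) \<partial>PiM I M) = integral\<^sup>L (M i) g \<bullet> integral\<^sup>L (M j) h"
proof -
  define F where "F b k = (if k = i then (\<lambda>z. g z \<bullet> b) else (\<lambda>z. h z \<bullet> b))" for b k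
  have F_integrable: "integrable (M k) (F b k)" if "k \<in> {i, j}" for b k
    using that assms by (auto simp: F_def)
  have split: "g (x i) \<bullet> h (x j) = (\<Sum>b\<in>Basis. \<Prod>k\<in>{i, j}. F b k (x k))" for x
    using assms(3) by (subst euclidean_inner) (simp add: F_def)
  have "{i, j} \<subseteq> I" using assms by auto
  note pair = integrable_PiM_prod_subset[OF this F_integrable] integral_PiM_prod_subset[OF this F_integrable]
  show "integrable (PiM I M) (\<lambda>x. g (x i) \<bullet> h (x j))"
    unfolding split using pair(1) by (intro Bochner_Integration.integrable_sum) auto
  have "(\<integral>x. g (x i) \<bullet> h (x j) \<partial>PiM I M) = (\<Sum>b\<in>Basis. \<integral>x. (\<Prod>k\<in>{i, j}. F b k (x k)) \<partial>PiM I M)"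
    unfolding split by (rule Bochner_Integration.integral_sum) (use pair(1) in auto)
  also have "\<dots> = (\<Sum>b\<in>Basis. \<Prod>k\<in>{i, j}. integral\<^sup>L (M k) (F b k))"
    using pair(2) by simp
  also have "\<dots> = (\<Sum>b\<in>Basis. (integral\<^sup>L (M i) g \<bullet> b) * (integral\<^sup>L (M j) h \<bullet> b))"
    using assms by (simp add: F_def)
  also have "\<dots> = integral\<^sup>L (M i) g \<bullet> integral\<^sup>L (M j) h"
    by (rule euclidean_inner[symmetric])
  finally show "(\<integral>x. g (x i) \<bullet> h (x j) \<partial>PiM I M) = integral\<^sup>L (M i) g \<bullet> integral\<^sup>L (M j) h" .
qed

lemma norm_sq_average_dev:
  fixes v :: "nat \<Rightarrow> 'a::real_inner"
  assumes "0 < n"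
  shows "(norm ((1 / real n) *\<^sub>R (\<Sum>i<n. v i) - m))\<^sup>2 = (\<Sum>i<n. \<Sum>j<n. (v i - m) \<bullet> (v j - m)) / (real n)\<^sup>2"
proof -
  have "(1 / real n) *\<^sub>R (\<Sum>i<n. v i) - m = (1 / real n) *\<^sub>R (\<Sum>i<n. v i - m)"
    using assms by (simp add: sum_subtractf scaleR_diff_right sum_constant_scaleR)
  then have "(norm ((1 / real n) *\<^sub>R (\<Sum>i<n. v i) - m))\<^sup>2 = (1 / real n)\<^sup>2 * (norm (\<Sum>i<n. v i - m))\<^sup>2"
    by (simp add: power_divide)
  also have "(norm (\<Sum>i<n. v i - m))\<^sup>2 = (\<Sum>i<n. \<Sum>j<n. (v i - m) \<bullet> (v j - m))"
    by (simp add: power2_norm_eq_inner inner_sum_left inner_sum_right inner_commute)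
  finally show ?thesis
    by (simp add: field_simps)
qed

lemma
  fixes g :: "'a \<Rightarrow> 'b::euclidean_space" and i j N :: nat
  assumes "prob_space P" and "integrable P g" and "integral\<^sup>L P g = 0"
    and "integrable P (\<lambda>z. (norm (g z))\<^sup>2)" and "i < N" and "j < N"
  shows integrable_iid_inner: "integrable (PiM {..<N} (\<lambda>_. P)) (\<lambda>s. g (s i) \<bullet> g (s j))"
    and integral_iid_inner: "(\<integral>s. g (s i) \<bullet> g (s j) \<partial>PiM {..<N} (\<lambda>_. P))
      = (if i = j then \<integral>z. (norm (g z))\<^sup>2 \<partial>P else 0)"
proof -
  interpret sample: prob_space P by fact
  interpret finite_product_prob_space "\<lambda>_. P" "{..<N}" by standard simp
  have "integrable (PiM {..<N} (\<lambda>_. P)) (\<lambda>s. g (s i) \<bullet> g (s j)) \<and>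
      (\<integral>s. g (s i) \<bullet> g (s j) \<partial>PiM {..<N} (\<lambda>_. P)) = (if i = j then \<integral>z. (norm (g z))\<^sup>2 \<partial>P else 0)"
  proof (cases "i = j")
    case True
    then have "(\<lambda>s. g (s i) \<bullet> g (s j)) = (\<lambda>s. \<Prod>k\<in>{i}. (norm (g (s k)))\<^sup>2)"
      by (simp add: power2_norm_eq_inner)
    then show ?thesis
      using True assms(4,5) integrable_PiM_prod_subset[of "{i}" "\<lambda>_ z. (norm (g z))\<^sup>2"]
        integral_PiM_prod_subset[of "{i}" "\<lambda>_ z. (norm (g z))\<^sup>2"]
      by simp
  next
    case False
    then show ?thesis
      using assms(2,3,5,6) integrable_PiM_inner_components[of i j g g] integral_PiM_inner_components[of i j g g]
      by simp
  qed
  then show "integrable (PiM {..<N} (\<lambda>_. P)) (\<lambda>s. g (s i) \<bullet> g (s j))"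
    and "(\<integral>s. g (s i) \<bullet> g (s j) \<partial>PiM {..<N} (\<lambda>_. P)) = (if i = j then \<integral>z. (norm (g z))\<^sup>2 \<partial>P else 0)"
    by auto
qed

lemma
  fixes f :: "'a \<Rightarrow> 'b::euclidean_space"
  assumes "prob_space P" and "integrable P f"
    and "integrable P (\<lambda>z. (norm (f z - integral\<^sup>L P f))\<^sup>2)" and "0 < n" and "n \<le> N"
  shows integrable_iid_mean_sq_dev:
      "integrable (PiM {..<N} (\<lambda>_. P)) (\<lambda>s. (norm ((1 / real n) *\<^sub>R (\<Sum>i<n. f (s i)) - integral\<^sup>L P f))\<^sup>2)"
    and iid_mean_variance:
      "(\<integral>s. (norm ((1 / real n) *\<^sub>R (\<Sum>i<n. f (s i)) - integral\<^sup>L P f))\<^sup>2 \<partial>PiM {..<N} (\<lambda>_. P))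
       = (\<integral>z. (norm (f z - integral\<^sup>L P f))\<^sup>2 \<partial>P) / real n"
proof -
  interpret sample: prob_space P by fact
  let ?Q = "PiM {..<N} (\<lambda>_. P)"
  define g where "g z = f z - integral\<^sup>L P f" for z
  define H where "H i j s = g (s i) \<bullet> g (s j)" for i j :: nat and s :: "nat \<Rightarrow> 'a"
  have g: "integrable P g" "integral\<^sup>L P g = 0" "integrable P (\<lambda>z. (norm (g z))\<^sup>2)"
    using assms(2,3) by (simp_all add: g_def[abs_def] sample.prob_space)
  have H_integrable: "integrable ?Q (H i j)" if "i < n" "j < n" for i j
    unfolding H_def using integrable_iid_inner[OF assms(1) g] that assms(5) by simp
  have expand: "(norm ((1 / real n) *\<^sub>R (\<Sum>i<n. f (s i)) - integral\<^sup>L P f))\<^sup>2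
      = (\<Sum>i<n. \<Sum>j<n. H i j s) / (real n)\<^sup>2" for s
    unfolding norm_sq_average_dev[OF assms(4)] by (simp add: H_def g_def)
  have "integrable ?Q (\<lambda>s. \<Sum>i<n. \<Sum>j<n. H i j s)"
    using H_integrable by (intro Bochner_Integration.integrable_sum) auto
  then show "integrable ?Q (\<lambda>s. (norm ((1 / real n) *\<^sub>R (\<Sum>i<n. f (s i)) - integral\<^sup>L P f))\<^sup>2)"
    by (simp add: expand)
  have "(\<integral>s. (\<Sum>i<n. \<Sum>j<n. H i j s) \<partial>?Q) = (\<Sum>i<n. \<integral>s. (\<Sum>j<n. H i j s) \<partial>?Q)"
    using H_integrable by (intro Bochner_Integration.integral_sum Bochner_Integration.integrable_sum) auto
  also have "\<dots> = (\<Sum>i<n. \<Sum>j<n. integral\<^sup>L ?Q (H i j))"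
    using H_integrable by (intro sum.cong refl Bochner_Integration.integral_sum) auto
  also have "\<dots> = real n * (\<integral>z. (norm (g z))\<^sup>2 \<partial>P)"
    unfolding H_def using integral_iid_inner[OF assms(1) g] assms(5) by simp
  finally show "(\<integral>s. (norm ((1 / real n) *\<^sub>R (\<Sum>i<n. f (s i)) - integral\<^sup>L P f))\<^sup>2 \<partial>?Q)
      = (\<integral>z. (norm (f z - integral\<^sup>L P f))\<^sup>2 \<partial>P) / real n"
    unfolding expand using assms(4) by (simp add: g_def power2_eq_square)
qed

lemma (in prob_space)
  fixes f :: "'a \<Rightarrow> 'b::euclidean_space"
  assumes [measurable]: "f \<in> borel_measurable M" and bounded: "AE x in M. norm (f x) \<le> r"
  shows integrable_of_norm_bounded: "integrable M f"
    and integrable_sq_dev_of_norm_bounded: "integrable M (\<lambda>x. (norm (f x - expectation f))\<^sup>2)"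
    and integral_sq_dev_le: "(\<integral>x. (norm (f x - expectation f))\<^sup>2 \<partial>M) \<le> r\<^sup>2"
proof -
  let ?m = "expectation f"
  show f_integrable: "integrable M f"
    using bounded by (intro integrable_const_bound[where B = r]) auto
  have sq_bounded: "AE x in M. (norm (f x))\<^sup>2 \<le> r\<^sup>2"
    using bounded by eventually_elim (auto intro: power_mono)
  have sq_integrable: "integrable M (\<lambda>x. (norm (f x))\<^sup>2)"
    using sq_bounded by (intro integrable_const_bound[where B = "r\<^sup>2"]) auto
  have expand: "(norm (f x - ?m))\<^sup>2 = (norm (f x))\<^sup>2 - 2 * (f x \<bullet> ?m) + (norm ?m)\<^sup>2" for x
    by (simp add: power2_norm_eq_inner inner_diff inner_commute)
  show "integrable M (\<lambda>x. (norm (f x - ?m))\<^sup>2)"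
    unfolding expand using f_integrable sq_integrable by simp
  have "(\<integral>x. (norm (f x - ?m))\<^sup>2 \<partial>M) = (\<integral>x. (norm (f x))\<^sup>2 \<partial>M) - (norm ?m)\<^sup>2"
    unfolding expand using f_integrable sq_integrable by (simp add: prob_space power2_norm_eq_inner)
  also have "\<dots> \<le> (\<integral>x. (norm (f x))\<^sup>2 \<partial>M)"
    by simp
  also have "\<dots> \<le> (\<integral>x. r\<^sup>2 \<partial>M)"
    using sq_integrable sq_bounded by (intro integral_mono_AE) auto
  finally show "(\<integral>x. (norm (f x - ?m))\<^sup>2 \<partial>M) \<le> r\<^sup>2"
    by (simp add: prob_space)
qed

lemma borel_measurable_fst_borel [measurable]:
  "fst \<in> borel_measurable (borel :: ('a::second_countable_topology \<times> 'b::second_countable_topology) measure)"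
  by (metis borel_prod measurable_fst)

lemma borel_measurable_snd_borel [measurable]:
  "snd \<in> borel_measurable (borel :: ('a::second_countable_topology \<times> 'b::second_countable_topology) measure)"
  by (metis borel_prod measurable_snd)

definition sample_mean :: "nat \<Rightarrow> (nat \<Rightarrow> 'a::real_vector \<times> 'b) \<Rightarrow> 'a" where
  "sample_mean n s = (1 / real n) *\<^sub>R (\<Sum>i<n. fst (s i))"

lemma (in prob_space)
  fixes X :: "'a \<Rightarrow> 'b::euclidean_space" and Y :: "'a \<Rightarrow> real"
  assumes [measurable]: "X \<in> borel_measurable M" "Y \<in> borel_measurable M"
    and bounded: "AE \<omega> in M. norm (X \<omega>) \<le> r" and "0 < n" and "n \<le> N"
  defines "Q \<equiv> PiM {..<N} (\<lambda>_. distr M borel (\<lambda>\<omega>. (X \<omega>, Y \<omega>)))"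
  shows integrable_sample_mean_sq_dev: "integrable Q (\<lambda>s. (norm (sample_mean n s - expectation X))\<^sup>2)"
    and sample_mean_sq_dev_le: "(\<integral>s. (norm (sample_mean n s - expectation X))\<^sup>2 \<partial>Q) \<le> r\<^sup>2 / real n"
proof -
  let ?P = "distr M borel (\<lambda>\<omega>. (X \<omega>, Y \<omega>))"
  have P: "prob_space ?P"
    by (rule prob_space_distr) measurable
  have mean: "integral\<^sup>L ?P fst = expectation X"
    by (subst integral_distr) auto
  have moments: "integrable ?P fst" "integrable ?P (\<lambda>z. (norm (fst z - integral\<^sup>L ?P fst))\<^sup>2)"
    using integrable_of_norm_bounded[OF _ bounded] integrable_sq_dev_of_norm_bounded[OF _ bounded]
    by (simp_all add: integrable_distr_eq mean)
  have variance: "(\<integral>z. (norm (fst z - integral\<^sup>L ?P fst))\<^sup>2 \<partial>?P) \<le> r\<^sup>2"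
    using integral_sq_dev_le[OF _ bounded] by (subst integral_distr) (auto simp: mean)
  show "integrable Q (\<lambda>s. (norm (sample_mean n s - expectation X))\<^sup>2)"
    using integrable_iid_mean_sq_dev[OF P moments assms(4,5)] by (simp add: Q_def sample_mean_def mean)
  show "(\<integral>s. (norm (sample_mean n s - expectation X))\<^sup>2 \<partial>Q) \<le> r\<^sup>2 / real n"
    using iid_mean_variance[OF P moments assms(4,5)] variance
    by (simp add: Q_def sample_mean_def mean divide_right_mono)
qed

lemma borel_measurable_clip [measurable]: "clip R \<in> borel_measurable borel"
  unfolding clip_def by measurable

lemma borel_measurable_closest_point_cball [measurable]:
  "closest_point (cball (0::'a::euclidean_space) D) \<in> borel_measurable borel"
proof (cases "D < 0")
  case True
  then have "closest_point (cball (0::'a) D) = (\<lambda>_. closest_point {} 0)"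
    by (simp add: closest_point_def fun_eq_iff)
  then show ?thesis by simp
next
  case False
  then show ?thesis
    by (intro borel_measurable_continuous_onI continuous_on_closest_point) auto
qed

lemma norm_sgd_iter_le: "0 \<le> D \<Longrightarrow> norm (sgd_iter D R lam mu xs k) \<le> D"
  by (cases k) (auto simp: Let_def intro!: closest_point_in_set[of "cball 0 D", simplified])

lemma borel_measurable_sgd_iter:
  fixes xs :: "'s \<Rightarrow> nat \<Rightarrow> 'a::euclidean_space \<times> real"
  assumes "\<And>t. 1 \<le> t \<Longrightarrow> t \<le> k \<Longrightarrow> (\<lambda>s. xs s t) \<in> borel_measurable Q"
    and [measurable]: "m \<in> borel_measurable Q"
  shows "(\<lambda>s. sgd_iter D R lam (m s) (xs s) k) \<in> borel_measurable Q"
  using assms(1)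
proof (induction k)
  case (Suc k)
  have [measurable]: "(\<lambda>s. xs s (Suc k)) \<in> borel_measurable Q"
    and [measurable]: "(\<lambda>s. sgd_iter D R lam (m s) (xs s) k) \<in> borel_measurable Q"
    using Suc by auto
  show ?case
    unfolding sgd_iter.simps Let_def by measurable
qed simp

lemma norm_tail_average_le:
  fixes v :: "nat \<Rightarrow> 'a::real_normed_vector"
  assumes "even T" "0 < T" "\<And>t. norm (v t) \<le> D"
  shows "norm ((2 / real T) *\<^sub>R (\<Sum>t\<in>{T div 2 + 1..T}. v t)) \<le> D"
proof -
  have "norm (\<Sum>t\<in>{T div 2 + 1..T}. v t) \<le> (\<Sum>t\<in>{T div 2 + 1..T}. norm (v t))"
    by (rule norm_sum)
  also have "\<dots> \<le> (\<Sum>t\<in>{T div 2 + 1..T}. D)"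
    using assms(3) by (rule sum_mono)
  also have "\<dots> = real (T div 2) * D"
    using \<open>even T\<close> by (auto elim!: evenE)
  finally show ?thesis
    using assms(1,2) by (auto elim!: evenE simp: field_simps)
qed

(* Phase 1 reads the samples s 0, ..., s (T - 1); step t of phase 2 reads s (T + t - 1). *)
definition sgd_output :: "real \<Rightarrow> real \<Rightarrow> real \<Rightarrow> nat \<Rightarrow> (nat \<Rightarrow> 'a::euclidean_space \<times> real) \<Rightarrow> 'a" where
  "sgd_output D R lam T s = (2 / real T) *\<^sub>R
     (\<Sum>t\<in>{T div 2 + 1..T}. sgd_iter D R lam (sample_mean T s) (\<lambda>t. s (T + t - 1)) (t - 1))"

lemma borel_measurable_PiM_component:
  assumes "i \<in> I" and "sets P = sets borel"
  shows "(\<lambda>s. s i) \<in> borel_measurable (PiM I (\<lambda>_. P))"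
  unfolding measurable_cong_sets[OF refl assms(2), symmetric]
  by (rule measurable_component_singleton[OF assms(1)])

lemma
  fixes P :: "('a::euclidean_space \<times> real) measure"
  assumes "sets P = sets borel"
  shows borel_measurable_sample_mean: "n \<le> N \<Longrightarrow> sample_mean n \<in> borel_measurable (PiM {..<N} (\<lambda>_. P))"
    and borel_measurable_sgd_output: "sgd_output D R lam T \<in> borel_measurable (PiM {..<2 * T} (\<lambda>_. P))"
proof -
  have component: "(\<lambda>s. s i) \<in> borel_measurable (PiM I (\<lambda>_. P))" if "i \<in> I" for i and I :: "nat set"
    using that assms by (rule borel_measurable_PiM_component)
  show mean: "sample_mean n \<in> borel_measurable (PiM {..<N} (\<lambda>_. P))" if "n \<le> N" for n N
    unfolding sample_mean_def[abs_def] using that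
    by (intro borel_measurable_scaleR borel_measurable_const borel_measurable_sum
        measurable_compose[OF component borel_measurable_fst_borel]) auto
  have "(\<lambda>s. sgd_iter D R lam (sample_mean T s) (\<lambda>t. s (T + t - 1)) k) \<in> borel_measurable (PiM {..<2 * T} (\<lambda>_. P))"
    if "k < T" for k
  proof (rule borel_measurable_sgd_iter)
    show "(\<lambda>s. s (T + t - 1)) \<in> borel_measurable (PiM {..<2 * T} (\<lambda>_. P))" if "1 \<le> t" "t \<le> k" for t
      using that \<open>k < T\<close> by (intro component) auto
  qed (rule mean, simp)
  then have "(\<lambda>s. \<Sum>t\<in>{T div 2 + 1..T}. sgd_iter D R lam (sample_mean T s) (\<lambda>t. s (T + t - 1)) (t - 1))
      \<in> borel_measurable (PiM {..<2 * T} (\<lambda>_. P))"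
    by (intro borel_measurable_sum) auto
  then show "sgd_output D R lam T \<in> borel_measurable (PiM {..<2 * T} (\<lambda>_. P))"
    unfolding sgd_output_def[abs_def] by (rule borel_measurable_scaleR[OF borel_measurable_const])
qed

lemma norm_sgd_output_le:
  assumes "even T" "0 < T" "0 \<le> D"
  shows "norm (sgd_output D R lam T s) \<le> D"
  unfolding sgd_output_def using assms by (intro norm_tail_average_le norm_sgd_iter_le)

lemma integrable_sq_dist_sgd_output:
  fixes P :: "('a::euclidean_space \<times> real) measure"
  assumes "prob_space P" and "sets P = sets borel" and "even T" "0 < T" "0 \<le> D"
  shows "integrable (PiM {..<2 * T} (\<lambda>_. P)) (\<lambda>s. (norm (sgd_output D R lam T s - w))\<^sup>2)"
proof -
  interpret prob_space "PiM {..<2 * T} (\<lambda>_. P)"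
    using assms(1) by (intro prob_space_PiM)
  have "(norm (sgd_output D R lam T s - w))\<^sup>2 \<le> (D + norm w)\<^sup>2" for s
    using norm_triangle_ineq4[of "sgd_output D R lam T s" w] norm_sgd_output_le[OF assms(3-5), of R lam s]
    by (intro power_mono) auto
  then show ?thesis
    using borel_measurable_sgd_output[OF assms(2)]
    by (intro integrable_const_bound[where B = "(D + norm w)\<^sup>2"]) auto
qed

theorem lemma9:
  fixes M :: "'w measure"
    and X :: "'w \<Rightarrow> real^'n" and Eps B :: "'w \<Rightarrow> real"
    and wstar :: "real^'n"
    and D \<sigma> \<alpha> \<rho> :: real and T :: nat
  assumes "prob_space M"
    and "D > 0" and "\<sigma> \<ge> 0" and "0 \<le> \<alpha>" and "\<alpha> < 1" and "\<rho> > 0"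
    and "T > 0" and "even T"
    and "norm wstar \<le> D"
    and "X \<in> borel_measurable M" and "Eps \<in> borel_measurable M" and "B \<in> borel_measurable M"
    and "prob_space.indep_sets M
           (\<lambda>i::nat. if i = 0 then {X -` A \<inter> space M | A. A \<in> sets borel}
                    else if i = 1 then {Eps -` A \<inter> space M | A. A \<in> sets borel}
                    else {B -` A \<inter> space M | A. A \<in> sets borel}) {0, 1, 2}"
    and "AE \<omega> in M. norm (X \<omega>) \<le> 1"
    and "psd (covariance_matrix M X - \<rho> *\<^sub>R mat 1)"
    and "AE \<omega> in M. \<bar>Eps \<omega>\<bar> \<le> \<sigma>"
    and "integral\<^sup>L M Eps = 0"
    and "measure M {\<omega> \<in> space M. B \<omega> \<noteq> 0} = \<alpha>"
  defines "R \<equiv> 6 * D + \<sigma>"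
    and "lam \<equiv> (1 - \<alpha>) * \<rho>"
    and "C \<equiv> (1 - \<alpha>) * \<rho> / 2"
    and "P \<equiv> distr M borel (\<lambda>\<omega>. (X \<omega>, wstar \<bullet> X \<omega> + Eps \<omega> + B \<omega>))"
    and "mu \<equiv> (\<lambda>s::nat \<Rightarrow> (real^'n) \<times> real. (1 / real T) *\<^sub>R (\<Sum>i<T. fst (s i)))"
    and "wbar \<equiv> (\<lambda>s::nat \<Rightarrow> (real^'n) \<times> real. (2 / real T) *\<^sub>R
           (\<Sum>t\<in>{T div 2 + 1..T}. sgd_iter D (6 * D + \<sigma>) ((1 - \<alpha>) * \<rho>)
             ((1 / real T) *\<^sub>R (\<Sum>i<T. fst (s i))) (\<lambda>t. s (T + t - 1)) (t - 1)))"
    and "L \<equiv> (\<lambda>(w::real^'n) (m::real^'n). integral\<^sup>L M (\<lambda>\<omega>.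
           huber (6 * D + \<sigma>) ((w - wstar) \<bullet> (X \<omega> - m) - wstar \<bullet> m - Eps \<omega> - B \<omega>)))"
    and "Ltil \<equiv> (\<lambda>(w::real^'n) (m::real^'n). integral\<^sup>L M (\<lambda>\<omega>.
           huber (6 * D + \<sigma>) ((w - wstar) \<bullet> (X \<omega> - integral\<^sup>L M X) - wstar \<bullet> m - Eps \<omega> - B \<omega>)))"
  shows "(\<integral>s. (Ltil (wbar s) (mu s) - L (wbar s) (mu s)) \<partial>(PiM {..<2*T} (\<lambda>_. P)))
         \<le> C / 2 * (\<integral>s. (norm (wbar s - wstar))\<^sup>2 \<partial>(PiM {..<2*T} (\<lambda>_. P)))
           + 2 * R\<^sup>2 / C * ((36 * ln (real T) + 4) / real T)"
proof -
  interpret prob_space M by fact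
  have [measurable]: "X \<in> borel_measurable M" "Eps \<in> borel_measurable M" "B \<in> borel_measurable M"
    using assms(10-12) by auto
  have "0 \<le> R" "0 < C"
    using assms(2,3,5,6) by (simp_all add: R_def C_def)
  define m0 where "m0 = expectation X"
  define Q where "Q = PiM {..<2 * T} (\<lambda>_. P)"
  have mu_eq: "mu = sample_mean T" and wbar_eq: "wbar = sgd_output D R lam T"
    by (simp_all add: fun_eq_iff mu_def wbar_def sample_mean_def sgd_output_def R_def lam_def)
  have wbar_dev: "integrable Q (\<lambda>s. (norm (wbar s - wstar))\<^sup>2)"
    unfolding wbar_eq Q_def P_def using assms(2,7,8)
    by (intro integrable_sq_dist_sgd_output prob_space_distr) auto
  have mu_dev: "integrable Q (\<lambda>s. (norm (mu s - m0))\<^sup>2)" "(\<integral>s. (norm (mu s - m0))\<^sup>2 \<partial>Q) \<le> 1 / real T"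
    using integrable_sample_mean_sq_dev[OF _ _ assms(14) assms(7), of _ "2 * T"]
      sample_mean_sq_dev_le[OF _ _ assms(14) assms(7), of _ "2 * T"]
    by (simp_all add: mu_eq m0_def Q_def P_def)
  have "Ltil (wbar s) (mu s) - L (wbar s) (mu s)
      \<le> C / 2 * (norm (wbar s - wstar))\<^sup>2 + R\<^sup>2 / (2 * C) * (norm (mu s - m0))\<^sup>2" for s
    using huber_recentering_gap_le[of X "\<lambda>\<omega>. wstar \<bullet> mu s + Eps \<omega> + B \<omega>" R C "wbar s - wstar" m0 "mu s"]
      \<open>0 \<le> R\<close> \<open>0 < C\<close>
    by (simp add: Ltil_def L_def R_def m0_def diff_diff_eq norm_minus_commute)
  then have "(\<integral>s. Ltil (wbar s) (mu s) - L (wbar s) (mu s) \<partial>Q)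
      \<le> (\<integral>s. C / 2 * (norm (wbar s - wstar))\<^sup>2 + R\<^sup>2 / (2 * C) * (norm (mu s - m0))\<^sup>2 \<partial>Q)"
    using wbar_dev mu_dev \<open>0 < C\<close> by (intro integral_mono') auto
  also have "\<dots> \<le> C / 2 * (\<integral>s. (norm (wbar s - wstar))\<^sup>2 \<partial>Q) + R\<^sup>2 / (2 * C) * (1 / real T)"
    using wbar_dev mu_dev mult_left_mono[OF mu_dev(2), of "R\<^sup>2 / (2 * C)"] \<open>0 < C\<close> by simp
  also have "\<dots> \<le> C / 2 * (\<integral>s. (norm (wbar s - wstar))\<^sup>2 \<partial>Q) + 2 * R\<^sup>2 / C * ((36 * ln (real T) + 4) / real T)"
    using assms(7) \<open>0 < C\<close> by (simp add: field_simps)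
  finally show ?thesis
    unfolding Q_def .
qed

end
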